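(* There is a universal constant $C$ such that the following holds. Let $p\ge1$, let $(a_{i,j})_{i\le n,j\le m}$ be a real matrix, and let $T\subset B^n_2+\sqrt p\,B^n_1$. Then there is a decomposition $T=\bigcup_{l=1}^NT_l$ with $N\le e^{Cp}$ such that for every $l\le N$ and every $z\in\mathbb{R}^m$, $$\mathbb{E}\sup_{x\in T_l}\sum_{i,j}a_{i,j}x_ig_jz_j\le C\Big(\sum_{i,j}a_{i,j}^2z_j^4\Big)^{1/4}\Big(\sum_{i,j}a_{i,j}^2\Big)^{1/4},$$ where $g_1,\dots,g_m$ are independent standard Gaussian random variables.
   Context: $B^n_2$ and $B^n_1$ denote the unit balls of $\ell_2^n$ and $\ell_1^n$, and $A+B$ is the Minkowski sum. *)

theory Defs
  imports "HOL-Probability.Probability"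
begin

text \<open>Vectors of R^n are represented as functions nat => real vanishing outside {..<n}.\<close>

definition ball2 :: "nat \<Rightarrow> (nat \<Rightarrow> real) set" where
  "ball2 n = {x. (\<forall>i\<ge>n. x i = 0) \<and> (\<Sum>i<n. (x i)\<^sup>2) \<le> 1}"

definition ball1 :: "nat \<Rightarrow> (nat \<Rightarrow> real) set" where
  "ball1 n = {x. (\<forall>i\<ge>n. x i = 0) \<and> (\<Sum>i<n. \<bar>x i\<bar>) \<le> 1}"

definition mink_sum :: "(nat \<Rightarrow> real) set \<Rightarrow> (nat \<Rightarrow> real) set \<Rightarrow> (nat \<Rightarrow> real) set" where
  "mink_sum A B = {(\<lambda>i. u i + v i) | u v. u \<in> A \<and> v \<in> B}"

definition dilate :: "real \<Rightarrow> (nat \<Rightarrow> real) set \<Rightarrow> (nat \<Rightarrow> real) set" where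
  "dilate c A = {(\<lambda>i. c * u i) | u. u \<in> A}"

text \<open>Law of (g_1,...,g_m): independent standard Gaussians (indices 0..m-1).\<close>
definition gauss_vec :: "nat \<Rightarrow> (nat \<Rightarrow> real) measure" where
  "gauss_vec m = PiM {..<m} (\<lambda>_. density lborel std_normal_density)"

end

theory Submission
  imports Defs
begin

text \<open>Write \<open>x = u + \<surd>p w\<close> with \<open>u \<in> B\<^sub>2\<^sup>n\<close>, \<open>w \<in> B\<^sub>1\<^sup>n\<close>, and give row \<open>i\<close> the weight
  \<open>r\<^sub>i = (\<Sum>\<^sub>j a\<^sub>i\<^sub>j\<^sup>2) / (\<Sum>\<^sub>i\<^sub>,\<^sub>j a\<^sub>i\<^sub>j\<^sup>2)\<close>. The coordinate \<open>y = \<surd>p w\<^sub>i\<close> is rounded to \<open>k\<^sub>i / \<surd>p\<close>,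
  where \<open>k\<^sub>i = \<plusminus>\<lfloor>\<surd>p |y|\<rfloor>\<close> if \<open>p r\<^sub>i (|k\<^sub>i| + 1) \<ge> 1\<close> and \<open>k\<^sub>i = 0\<close> otherwise; a piece \<open>T\<^sub>l\<close>
  collects the points with a common rounding \<open>k\<close>. Counting the possible \<open>k\<close> with the weights
  \<open>2 ^ -(\<Sum>\<^sub>i |k\<^sub>i|)\<close> shows that there are at most \<open>exp (8 p)\<close> of them.

  On one piece put \<open>V\<^sub>i = \<Sum>\<^sub>j a\<^sub>i\<^sub>j z\<^sub>j g\<^sub>j\<close>. For all \<open>\<mu>, \<nu> > 0\<close>, Young's inequality (on the
  rounding error of a rounded coordinate, whose square is at most \<open>|y| / \<surd>p\<close>) and a case
  split on \<open>|V\<^sub>i| \<le> \<nu> / \<surd>p\<close> (for a coordinate rounded to \<open>0\<close>, where \<open>|y| r\<^sub>i \<surd>p\<^sup>3 \<le> 1\<close>) give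
  the pointwise bound
  \<open>\<Sum> x\<^sub>i V\<^sub>i \<le> \<Sum> k\<^sub>i V\<^sub>i / \<surd>p + \<mu> + \<nu> + \<Sum> V\<^sub>i\<^sup>2 / \<mu> + \<Sum> V\<^sub>i ^ 4 / (r\<^sub>i \<nu> ^ 3)\<close>,
  whose right-hand side does not depend on \<open>x\<close>. Its Gaussian expectation follows from the second
  and fourth moments of \<open>V\<^sub>i\<close>; Cauchy-Schwarz and the choice
  \<open>\<mu> = \<nu> = (\<Sum> a\<^sub>i\<^sub>j\<^sup>2 z\<^sub>j ^ 4) ^ (1/4) (\<Sum> a\<^sub>i\<^sub>j\<^sup>2) ^ (1/4)\<close> then bound it by six times this
  quantity.\<close>

abbreviation std_gauss :: "real measure" where
  "std_gauss \<equiv> density lborel std_normal_density"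

lemma prob_space_gauss_vec: "prob_space (gauss_vec m)"
  unfolding gauss_vec_def
  by (intro prob_space_PiM prob_space_normal_density) simp

lemma gauss_vec_component_measurable:
  assumes "j < m"
  shows "(\<lambda>g. g j) \<in> borel_measurable (gauss_vec m)"
proof -
  have "(\<lambda>g. g j) \<in> measurable (PiM {..<m} (\<lambda>_. std_gauss)) std_gauss"
    using assms by (intro measurable_component_singleton) auto
  then show ?thesis unfolding gauss_vec_def
    by (subst measurable_cong_sets[OF refl, where N'=std_gauss]) auto
qed

lemma distr_gauss_vec_component:
  assumes "j < m"
  shows "distr (gauss_vec m) borel (\<lambda>g. g j) = std_gauss"
proof -
  have "distr (gauss_vec m) borel (\<lambda>g. g j) = distr (gauss_vec m) std_gauss (\<lambda>g. g j)"
    by (rule distr_cong) auto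
  also have "\<dots> = std_gauss"
    unfolding gauss_vec_def using assms
    by (intro distr_PiM_component prob_space_normal_density) auto
  finally show ?thesis .
qed

lemma distributed_gauss_vec_component:
  assumes "j < m"
  shows "distributed (gauss_vec m) lborel (\<lambda>g. g j) std_normal_density"
proof -
  have "distr (gauss_vec m) lborel (\<lambda>g. g j) = distr (gauss_vec m) borel (\<lambda>g. g j)"
    by (rule distr_cong) auto
  then show ?thesis
    unfolding distributed_def
    using distr_gauss_vec_component[OF assms] gauss_vec_component_measurable[OF assms] by auto
qed

lemma indep_vars_gauss_vec_components:
  assumes "m > 0"
  shows "prob_space.indep_vars (gauss_vec m) (\<lambda>_. borel) (\<lambda>j g. g j) {..<m}"
proof -
  interpret prob_space "gauss_vec m" by (rule prob_space_gauss_vec)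
  have ne: "{..<m} \<noteq> {}" using assms by auto
  have rv: "\<And>i. i \<in> {..<m} \<Longrightarrow> random_variable borel (\<lambda>g. g i)"
    using gauss_vec_component_measurable by auto
  have "distr (gauss_vec m) (\<Pi>\<^sub>M i\<in>{..<m}. borel) (\<lambda>x. \<lambda>i\<in>{..<m}. x i) = gauss_vec m"
  proof -
    have "distr (gauss_vec m) (\<Pi>\<^sub>M i\<in>{..<m}. borel) (\<lambda>x. \<lambda>i\<in>{..<m}. x i)
        = distr (gauss_vec m) (gauss_vec m) (\<lambda>x. x)"
      unfolding gauss_vec_def
      by (rule distr_cong) (auto intro!: sets_PiM_cong simp: space_PiM PiE_def extensional_restrict)
    then show ?thesis by simp
  qed
  moreover have "(\<Pi>\<^sub>M i\<in>{..<m}. distr (gauss_vec m) borel (\<lambda>g. g i)) = gauss_vec m"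
    unfolding gauss_vec_def
    by (rule PiM_cong) (auto simp: distr_gauss_vec_component[unfolded gauss_vec_def])
  ultimately show ?thesis
    using indep_vars_iff_distr_eq_PiM'[OF ne rv] by simp
qed

lemma distributed_gauss_vec_linear:
  fixes b :: "nat \<Rightarrow> real"
  assumes s: "0 < (\<Sum>j<m. (b j)\<^sup>2)"
  shows "distributed (gauss_vec m) lborel (\<lambda>g. \<Sum>j<m. b j * g j)
           (normal_density 0 (sqrt (\<Sum>j<m. (b j)\<^sup>2)))"
proof -
  interpret prob_space "gauss_vec m" by (rule prob_space_gauss_vec)
  define I where "I = {j. j < m \<and> b j \<noteq> 0}"
  have "I \<noteq> {}"
  proof
    assume "I = {}"
    then have "\<And>j. j < m \<Longrightarrow> b j = 0" unfolding I_def by auto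
    then show False using s by simp
  qed
  have "m > 0" using s by (cases m) auto
  have "indep_vars (\<lambda>_. borel) (\<lambda>j. (\<lambda>x. b j * x) \<circ> (\<lambda>g. g j)) I"
    by (rule indep_vars_compose[OF indep_vars_subset[OF indep_vars_gauss_vec_components[OF \<open>m > 0\<close>]]])
      (auto simp: I_def)
  then have indep: "indep_vars (\<lambda>_. borel) (\<lambda>j g. b j * g j) I"
    by (simp add: comp_def)
  have "distributed (gauss_vec m) lborel (\<lambda>g. b j * g j) (normal_density 0 \<bar>b j\<bar>)"
    if "j \<in> I" for j
  proof -
    have "b j \<noteq> 0" "j < m" using that by (auto simp: I_def)
    from normal_density_affine[OF distributed_gauss_vec_component[OF \<open>j < m\<close>] _ \<open>b j \<noteq> 0\<close>, of 0]
    show ?thesis by simp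
  qed
  from sum_indep_normal[OF _ \<open>I \<noteq> {}\<close> indep _ this]
  have "distributed (gauss_vec m) lborel (\<lambda>g. \<Sum>j\<in>I. b j * g j)
          (normal_density 0 (sqrt (\<Sum>j\<in>I. (b j)\<^sup>2)))"
    by (simp add: I_def)
  moreover have "(\<lambda>g. \<Sum>j\<in>I. b j * g j) = (\<lambda>g. \<Sum>j<m. b j * g j)"
    by (rule ext, rule sum.mono_neutral_left) (auto simp: I_def)
  moreover have "(\<Sum>j\<in>I. (b j)\<^sup>2) = (\<Sum>j<m. (b j)\<^sup>2)"
    by (rule sum.mono_neutral_left) (auto simp: I_def)
  ultimately show ?thesis by simp
qed

lemma gauss_vec_linear_moments:
  fixes b :: "nat \<Rightarrow> real" and m :: nat
  defines "s \<equiv> \<Sum>j<m. (b j)\<^sup>2"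
  shows "integrable (gauss_vec m) (\<lambda>g. (\<Sum>j<m. b j * g j) ^ k)"
    and "(\<integral>g. (\<Sum>j<m. b j * g j) \<partial>gauss_vec m) = 0"
    and "(\<integral>g. (\<Sum>j<m. b j * g j)\<^sup>2 \<partial>gauss_vec m) = s"
    and "(\<integral>g. (\<Sum>j<m. b j * g j) ^ 4 \<partial>gauss_vec m) = 3 * s\<^sup>2"
proof -
  interpret prob_space "gauss_vec m" by (rule prob_space_gauss_vec)
  let ?X = "\<lambda>g. \<Sum>j<m. b j * g j"
  have "integrable (gauss_vec m) (\<lambda>g. ?X g ^ k) \<and>
        (\<integral>g. ?X g \<partial>gauss_vec m) = 0 \<and>
        (\<integral>g. (?X g)\<^sup>2 \<partial>gauss_vec m) = s \<and>
        (\<integral>g. (?X g) ^ 4 \<partial>gauss_vec m) = 3 * s\<^sup>2"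
  proof (cases "s > 0")
    case False
    moreover have "0 \<le> s" unfolding s_def by (simp add: sum_nonneg)
    ultimately have "s = 0" by simp
    then have "\<And>j. j < m \<Longrightarrow> b j = 0" unfolding s_def
      by (subst (asm) sum_nonneg_eq_0_iff) auto
    then have "\<And>g. ?X g = 0" by simp
    then show ?thesis using \<open>s = 0\<close> by (simp add: power_0_left)
  next
    case True
    let ?f = "normal_density 0 (sqrt s)"
    have distr: "distributed (gauss_vec m) lborel ?X ?f"
      using distributed_gauss_vec_linear[of b m] True unfolding s_def by simp
    have "0 < sqrt s" using True by simp
    have "integrable lborel (\<lambda>x. ?f x * (x - 0) ^ k)" for k
      using \<open>0 < sqrt s\<close> by (intro integrable_normal_moment)
    then have int: "integrable (gauss_vec m) (\<lambda>g. ?X g ^ k)" for k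
      using distributed_integrable[OF distr, of "\<lambda>x. x ^ k"] by simp
    have moment: "(\<integral>g. ?X g ^ k \<partial>gauss_vec m) = (\<integral>x. ?f x * x ^ k \<partial>lborel)" for k
      using distributed_integral[OF distr, of "\<lambda>x. x ^ k"] by simp
    have "(\<integral>x. ?f x * x ^ 1 \<partial>lborel) = 0"
      using integral_normal_moment_odd[of "sqrt s" 0 0] \<open>0 < sqrt s\<close> by simp
    moreover have "(\<integral>x. ?f x * x ^ 2 \<partial>lborel) = s"
      using integral_normal_moment_even[of "sqrt s" 0 1] \<open>0 < sqrt s\<close> True by simp
    moreover have "(\<integral>x. ?f x * x ^ 4 \<partial>lborel) = 3 * s\<^sup>2"
      using integral_normal_moment_even[of "sqrt s" 0 2] \<open>0 < sqrt s\<close> True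
      by (simp add: fact_numeral power2_eq_square field_simps)
    ultimately show ?thesis using int moment[of 1] moment[of 2] moment[of 4] by simp
  qed
  then show "integrable (gauss_vec m) (\<lambda>g. (\<Sum>j<m. b j * g j) ^ k)"
    and "(\<integral>g. (\<Sum>j<m. b j * g j) \<partial>gauss_vec m) = 0"
    and "(\<integral>g. (\<Sum>j<m. b j * g j)\<^sup>2 \<partial>gauss_vec m) = s"
    and "(\<integral>g. (\<Sum>j<m. b j * g j) ^ 4 \<partial>gauss_vec m) = 3 * s\<^sup>2" by auto
qed

lemma integral_gauss_vec_dominant:
  fixes b :: "nat \<Rightarrow> nat \<Rightarrow> real" and c r :: "nat \<Rightarrow> real" and \<mu> \<nu> :: real and m n :: nat
  defines "V \<equiv> \<lambda>i g. \<Sum>j<m. b i j * g j"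
  defines "s \<equiv> \<lambda>i. \<Sum>j<m. (b i j)\<^sup>2"
  defines "U \<equiv> \<lambda>g. (\<Sum>i<n. c i * V i g) + \<mu> + \<nu> + (\<Sum>i<n. (V i g)\<^sup>2) / \<mu>
                  + (\<Sum>i<n. V i g ^ 4 / (r i * \<nu> ^ 3))"
  shows "integrable (gauss_vec m) U"
    and "(\<integral>g. U g \<partial>gauss_vec m) = \<mu> + \<nu> + (\<Sum>i<n. s i) / \<mu> + 3 * (\<Sum>i<n. (s i)\<^sup>2 / r i) / \<nu> ^ 3"
proof -
  interpret prob_space "gauss_vec m" by (rule prob_space_gauss_vec)
  note moments = gauss_vec_linear_moments[where b = "b i" and m = m for i]
  let ?A = "\<lambda>g. \<Sum>i<n. c i * V i g"
  let ?B = "\<lambda>g. (\<Sum>i<n. (V i g)\<^sup>2) / \<mu>"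
  let ?C = "\<lambda>g. \<Sum>i<n. V i g ^ 4 / (r i * \<nu> ^ 3)"
  have V1: "integrable (gauss_vec m) (V i)" for i
    using moments(1)[of _ 1] unfolding V_def by simp
  have iA: "integrable (gauss_vec m) ?A" and iB: "integrable (gauss_vec m) ?B"
    and iC: "integrable (gauss_vec m) ?C"
    using V1 moments(1) unfolding V_def by auto
  show "integrable (gauss_vec m) U"
    unfolding U_def using iA iB iC by simp
  have "(\<integral>g. ?A g \<partial>gauss_vec m) = 0"
    using V1 moments(2) unfolding V_def by (simp add: integral_sum)
  moreover have "(\<integral>g. ?B g \<partial>gauss_vec m) = (\<Sum>i<n. s i) / \<mu>"
    using moments(1,3) unfolding V_def s_def by (simp add: integral_sum)
  moreover have "(\<integral>g. ?C g \<partial>gauss_vec m) = 3 * (\<Sum>i<n. (s i)\<^sup>2 / r i) / \<nu> ^ 3"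
    using moments(1,4) unfolding V_def s_def
    by (simp add: integral_sum sum_distrib_left sum_divide_distrib)
  moreover have "(\<integral>g. U g \<partial>gauss_vec m)
      = (\<integral>g. ?A g \<partial>gauss_vec m) + \<mu> + \<nu> + (\<integral>g. ?B g \<partial>gauss_vec m) + (\<integral>g. ?C g \<partial>gauss_vec m)"
    unfolding U_def using iA iB iC by (simp add: prob_space)
  ultimately show "(\<integral>g. U g \<partial>gauss_vec m)
      = \<mu> + \<nu> + (\<Sum>i<n. s i) / \<mu> + 3 * (\<Sum>i<n. (s i)\<^sup>2 / r i) / \<nu> ^ 3"
    by simp
qed

lemma mult_le_young_square:
  fixes d v \<mu> :: real
  assumes "\<mu> > 0"
  shows "d * v \<le> \<mu> * d\<^sup>2 / 2 + v\<^sup>2 / (2 * \<mu>)"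
proof -
  have "0 \<le> (\<mu> * d - v)\<^sup>2" by simp
  then have "2 * \<mu> * (d * v) \<le> \<mu>\<^sup>2 * d\<^sup>2 + v\<^sup>2" by (simp add: power2_eq_square algebra_simps)
  then show ?thesis using assms by (simp add: field_simps power2_eq_square)
qed

lemma rounding_error_mult_le:
  fixes y v q t \<mu> :: real
  assumes q: "q > 0" and t: "0 \<le> t" "t \<le> q * \<bar>y\<bar>" "q * \<bar>y\<bar> < t + 1" and "\<mu> > 0"
  shows "(y - sgn y * t / q) * v \<le> \<mu> * \<bar>y\<bar> / (2 * q) + v\<^sup>2 / (2 * \<mu>)"
proof -
  define d where "d = y - sgn y * t / q"
  have d: "\<bar>d\<bar> = \<bar>y\<bar> - t / q"
    using t q by (cases y "0 :: real" rule: linorder_cases) (auto simp: d_def field_simps)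
  moreover have "\<bar>y\<bar> < t / q + 1 / q" and "0 \<le> t / q"
    using t q by (auto simp: field_simps)
  ultimately have "\<bar>d\<bar> \<le> 1 / q" and "\<bar>d\<bar> \<le> \<bar>y\<bar>"
    by linarith+
  then have "\<bar>d\<bar> * \<bar>d\<bar> \<le> \<bar>y\<bar> * (1 / q)" by (intro mult_mono) auto
  then have "d\<^sup>2 \<le> \<bar>y\<bar> / q" by (simp add: power2_eq_square)
  have "d * v \<le> \<mu> * d\<^sup>2 / 2 + v\<^sup>2 / (2 * \<mu>)" by (rule mult_le_young_square[OF \<open>\<mu> > 0\<close>])
  also have "\<dots> \<le> \<mu> * (\<bar>y\<bar> / q) / 2 + v\<^sup>2 / (2 * \<mu>)"
    using \<open>d\<^sup>2 \<le> \<bar>y\<bar> / q\<close> \<open>\<mu> > 0\<close> by (intro add_right_mono divide_right_mono mult_left_mono) auto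
  finally show ?thesis by (simp add: d_def)
qed

lemma small_coord_mult_le:
  fixes y v q \<rho> \<nu> :: real
  assumes q: "q > 0" and "\<rho> > 0" and y: "\<bar>y\<bar> * \<rho> * q ^ 3 \<le> 1" and "\<nu> > 0"
  shows "y * v \<le> \<nu> * \<bar>y\<bar> / q + v ^ 4 / (\<rho> * \<nu> ^ 3)"
proof (cases "\<bar>v\<bar> \<le> \<nu> / q")
  case True
  have "y * v \<le> \<bar>y\<bar> * \<bar>v\<bar>" by (simp add: abs_mult[symmetric])
  also have "\<dots> \<le> \<bar>y\<bar> * (\<nu> / q)" by (intro mult_left_mono True) auto
  moreover have "0 \<le> v ^ 4 / (\<rho> * \<nu> ^ 3)"
    using \<open>\<rho> > 0\<close> \<open>\<nu> > 0\<close> by (simp add: zero_le_even_power)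
  ultimately show ?thesis by (simp add: mult.commute)
next
  case False
  have "0 < \<nu> / q" using \<open>\<nu> > 0\<close> q by simp
  have "y * v \<le> \<bar>y\<bar> * \<bar>v\<bar>" by (simp add: abs_mult[symmetric])
  also have "\<dots> = \<bar>y\<bar> * \<bar>v\<bar> ^ 4 / \<bar>v\<bar> ^ 3" using False \<open>0 < \<nu> / q\<close> by (simp add: power_eq_if)
  also have "\<dots> \<le> \<bar>y\<bar> * \<bar>v\<bar> ^ 4 / (\<nu> / q) ^ 3"
    using False \<open>0 < \<nu> / q\<close> by (intro divide_left_mono power_mono) auto
  also have "\<dots> = (\<bar>y\<bar> * q ^ 3) * v ^ 4 / \<nu> ^ 3"
    using q by (simp add: power_divide field_simps power_abs)
  also have "\<dots> \<le> (1 / \<rho>) * v ^ 4 / \<nu> ^ 3"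
    using y \<open>\<rho> > 0\<close> \<open>\<nu> > 0\<close>
    by (intro divide_right_mono mult_right_mono) (auto simp: field_simps zero_le_even_power)
  finally show ?thesis
    using \<open>\<nu> > 0\<close> q by (simp add: add_increasing)
qed

definition round_coord :: "real \<Rightarrow> real \<Rightarrow> real \<Rightarrow> int" where
  "round_coord p r y =
     (if 1 \<le> p * r * (of_int \<lfloor>sqrt p * \<bar>y\<bar>\<rfloor> + 1)
      then (if y < 0 then - \<lfloor>sqrt p * \<bar>y\<bar>\<rfloor> else \<lfloor>sqrt p * \<bar>y\<bar>\<rfloor>) else 0)"

lemma abs_round_coord_le:
  assumes "p \<ge> 0"
  shows "\<bar>of_int (round_coord p r y)\<bar> \<le> sqrt p * \<bar>y\<bar>"
proof -
  have "0 \<le> \<lfloor>sqrt p * \<bar>y\<bar>\<rfloor>" using assms by simp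
  then have "\<bar>of_int (round_coord p r y)\<bar> \<le> (of_int \<lfloor>sqrt p * \<bar>y\<bar>\<rfloor> :: real)"
    by (simp add: round_coord_def)
  also have "\<dots> \<le> sqrt p * \<bar>y\<bar>" by (rule of_int_floor_le)
  finally show ?thesis .
qed

lemma round_coord_nonzero:
  assumes "p \<ge> 0" and "round_coord p r y \<noteq> 0"
  shows "1 \<le> p * r * (\<bar>of_int (round_coord p r y)\<bar> + 1)"
proof -
  have "0 \<le> \<lfloor>sqrt p * \<bar>y\<bar>\<rfloor>" using assms(1) by simp
  then show ?thesis using assms(2) by (auto simp: round_coord_def split: if_splits)
qed

lemma round_coord_error_mult_le:
  fixes p r y v \<mu> \<nu> :: real
  assumes p: "p \<ge> 1" and r: "r \<ge> 0" and v: "r = 0 \<Longrightarrow> v = 0" and "\<mu> > 0" and "\<nu> > 0"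
  shows "(y - of_int (round_coord p r y) / sqrt p) * v
     \<le> (\<mu> / 2 + \<nu>) * \<bar>y\<bar> / sqrt p + v\<^sup>2 / (2 * \<mu>) + v ^ 4 / (r * \<nu> ^ 3)"
proof -
  define q where "q = sqrt p"
  define t :: real where "t = of_int \<lfloor>q * \<bar>y\<bar>\<rfloor>"
  have "q > 0" using p by (simp add: q_def)
  have t_le: "0 \<le> t" "t \<le> q * \<bar>y\<bar>"
    using \<open>q > 0\<close> unfolding t_def by simp_all
  have t_gt: "q * \<bar>y\<bar> < t + 1"
    unfolding t_def by linarith
  have split: "(\<mu> / 2 + \<nu>) * \<bar>y\<bar> / q = \<mu> * \<bar>y\<bar> / (2 * q) + \<nu> * \<bar>y\<bar> / q"
    using \<open>q > 0\<close> by (simp add: field_simps)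
  have "0 \<le> v ^ 4 / (r * \<nu> ^ 3)" "0 \<le> v\<^sup>2 / (2 * \<mu>)"
    "0 \<le> \<mu> * \<bar>y\<bar> / (2 * q)" "0 \<le> \<nu> * \<bar>y\<bar> / q"
    using r \<open>\<mu> > 0\<close> \<open>\<nu> > 0\<close> \<open>q > 0\<close> by (auto simp: zero_le_even_power)
  show ?thesis
  proof (cases "1 \<le> p * r * (t + 1)")
    case True
    then have "of_int (round_coord p r y) = sgn y * t"
      unfolding round_coord_def t_def q_def by (auto simp: sgn_if)
    moreover have "(y - sgn y * t / q) * v \<le> \<mu> * \<bar>y\<bar> / (2 * q) + v\<^sup>2 / (2 * \<mu>)"
      by (rule rounding_error_mult_le[OF \<open>q > 0\<close> t_le t_gt \<open>\<mu> > 0\<close>])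
    ultimately show ?thesis
      using split \<open>0 \<le> v ^ 4 / (r * \<nu> ^ 3)\<close> \<open>0 \<le> \<nu> * \<bar>y\<bar> / q\<close> unfolding q_def by simp
  next
    case False
    then have k: "round_coord p r y = 0" unfolding round_coord_def t_def q_def by auto
    show ?thesis
    proof (cases "r = 0")
      case True
      then show ?thesis using v k split \<open>0 \<le> \<mu> * \<bar>y\<bar> / (2 * q)\<close> \<open>0 \<le> \<nu> * \<bar>y\<bar> / q\<close>
        unfolding q_def by simp
    next
      case False
      have "\<bar>y\<bar> * r * q ^ 3 = (q * \<bar>y\<bar>) * (p * r)"
        using p by (simp add: q_def power3_eq_cube algebra_simps)
      also have "\<dots> \<le> (t + 1) * (p * r)" using t_gt r p by (intro mult_right_mono) auto
      also have "\<dots> \<le> 1" using \<open>\<not> 1 \<le> p * r * (t + 1)\<close> by (simp add: algebra_simps)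
      finally have "y * v \<le> \<nu> * \<bar>y\<bar> / q + v ^ 4 / (r * \<nu> ^ 3)"
        using False r by (intro small_coord_mult_le[OF \<open>q > 0\<close> _ _ \<open>\<nu> > 0\<close>]) auto
      then show ?thesis
        using k split \<open>0 \<le> v\<^sup>2 / (2 * \<mu>)\<close> \<open>0 \<le> \<mu> * \<bar>y\<bar> / (2 * q)\<close> unfolding q_def by simp
    qed
  qed
qed

lemma ball2_sum_mult_le:
  assumes "u \<in> ball2 n" and "\<mu> > 0"
  shows "(\<Sum>i<n. u i * v i) \<le> \<mu> / 2 + (\<Sum>i<n. (v i)\<^sup>2) / (2 * \<mu>)"
proof -
  have "(\<Sum>i<n. u i * v i) \<le> (\<Sum>i<n. \<mu> * (u i)\<^sup>2 / 2 + (v i)\<^sup>2 / (2 * \<mu>))"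
    using assms(2) by (intro sum_mono mult_le_young_square)
  also have "\<dots> = \<mu> / 2 * (\<Sum>i<n. (u i)\<^sup>2) + (\<Sum>i<n. (v i)\<^sup>2) / (2 * \<mu>)"
    by (simp add: sum.distrib sum_distrib_left sum_divide_distrib)
  also have "\<dots> \<le> \<mu> / 2 + (\<Sum>i<n. (v i)\<^sup>2) / (2 * \<mu>)"
    using assms by (simp add: ball2_def mult_left_le)
  finally show ?thesis .
qed

lemma ball1_rounding_error_le:
  assumes p: "p \<ge> 1" and "w \<in> ball1 n" and "\<mu> > 0" and "\<nu> > 0"
    and r: "\<And>i. i < n \<Longrightarrow> 0 \<le> r i" and v: "\<And>i. i < n \<Longrightarrow> r i = 0 \<Longrightarrow> v i = 0"
  defines "c \<equiv> \<lambda>i. of_int (round_coord p (r i) (sqrt p * w i)) / sqrt p"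
  shows "(\<Sum>i<n. (sqrt p * w i - c i) * v i)
      \<le> \<mu> / 2 + \<nu> + (\<Sum>i<n. (v i)\<^sup>2) / (2 * \<mu>) + (\<Sum>i<n. v i ^ 4 / (r i * \<nu> ^ 3))"
proof -
  have "(\<Sum>i<n. (sqrt p * w i - c i) * v i)
      \<le> (\<Sum>i<n. (\<mu> / 2 + \<nu>) * \<bar>w i\<bar> + (v i)\<^sup>2 / (2 * \<mu>) + v i ^ 4 / (r i * \<nu> ^ 3))"
  proof (rule sum_mono)
    fix i assume "i \<in> {..<n}"
    then have "(sqrt p * w i - c i) * v i \<le> (\<mu> / 2 + \<nu>) * \<bar>sqrt p * w i\<bar> / sqrt p
        + (v i)\<^sup>2 / (2 * \<mu>) + v i ^ 4 / (r i * \<nu> ^ 3)"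
      unfolding c_def using p r v \<open>\<mu> > 0\<close> \<open>\<nu> > 0\<close> by (intro round_coord_error_mult_le) auto
    then show "(sqrt p * w i - c i) * v i
        \<le> (\<mu> / 2 + \<nu>) * \<bar>w i\<bar> + (v i)\<^sup>2 / (2 * \<mu>) + v i ^ 4 / (r i * \<nu> ^ 3)"
      using p by (simp add: abs_mult)
  qed
  also have "\<dots> = (\<mu> / 2 + \<nu>) * (\<Sum>i<n. \<bar>w i\<bar>) + (\<Sum>i<n. (v i)\<^sup>2) / (2 * \<mu>)
                  + (\<Sum>i<n. v i ^ 4 / (r i * \<nu> ^ 3))"
    by (simp add: sum.distrib sum_distrib_left sum_divide_distrib)
  also have "\<dots> \<le> \<mu> / 2 + \<nu> + (\<Sum>i<n. (v i)\<^sup>2) / (2 * \<mu>) + (\<Sum>i<n. v i ^ 4 / (r i * \<nu> ^ 3))"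
    using \<open>w \<in> ball1 n\<close> \<open>\<mu> > 0\<close> \<open>\<nu> > 0\<close> by (simp add: ball1_def mult_left_le)
  finally show ?thesis .
qed

definition cell :: "real \<Rightarrow> nat \<Rightarrow> (nat \<Rightarrow> real) \<Rightarrow> (nat \<Rightarrow> int) \<Rightarrow> (nat \<Rightarrow> real) set" where
  "cell p n r k = {(\<lambda>i. u i + sqrt p * w i) | u w. u \<in> ball2 n \<and> w \<in> ball1 n \<and>
      (\<forall>i<n. round_coord p (r i) (sqrt p * w i) = k i)}"

lemma linear_form_le_on_cell:
  assumes p: "p \<ge> 1" and x: "x \<in> cell p n r k" and "\<mu> > 0" and "\<nu> > 0"
    and r: "\<And>i. i < n \<Longrightarrow> 0 \<le> r i" and v: "\<And>i. i < n \<Longrightarrow> r i = 0 \<Longrightarrow> v i = 0"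
  shows "(\<Sum>i<n. x i * v i) \<le> (\<Sum>i<n. of_int (k i) / sqrt p * v i) + \<mu> + \<nu>
           + (\<Sum>i<n. (v i)\<^sup>2) / \<mu> + (\<Sum>i<n. v i ^ 4 / (r i * \<nu> ^ 3))"
proof -
  obtain u w where u: "u \<in> ball2 n" and w: "w \<in> ball1 n" and x: "x = (\<lambda>i. u i + sqrt p * w i)"
    and k: "\<And>i. i < n \<Longrightarrow> round_coord p (r i) (sqrt p * w i) = k i"
    using x unfolding cell_def by blast
  define c where "c = (\<lambda>i. of_int (k i) / sqrt p)"
  have "(\<Sum>i<n. x i * v i) = (\<Sum>i<n. c i * v i) + (\<Sum>i<n. u i * v i)
      + (\<Sum>i<n. (sqrt p * w i - c i) * v i)"
    unfolding x by (simp add: sum.distrib[symmetric] algebra_simps)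
  moreover have "(\<Sum>i<n. u i * v i) \<le> \<mu> / 2 + (\<Sum>i<n. (v i)\<^sup>2) / (2 * \<mu>)"
    using u \<open>\<mu> > 0\<close> by (rule ball2_sum_mult_le)
  moreover have "(\<Sum>i<n. (sqrt p * w i - c i) * v i)
      \<le> \<mu> / 2 + \<nu> + (\<Sum>i<n. (v i)\<^sup>2) / (2 * \<mu>) + (\<Sum>i<n. v i ^ 4 / (r i * \<nu> ^ 3))"
  proof -
    have "(\<Sum>i<n. (sqrt p * w i - c i) * v i)
        = (\<Sum>i<n. (sqrt p * w i - of_int (round_coord p (r i) (sqrt p * w i)) / sqrt p) * v i)"
      using k by (simp add: c_def)
    also have "\<dots> \<le> \<mu> / 2 + \<nu> + (\<Sum>i<n. (v i)\<^sup>2) / (2 * \<mu>) + (\<Sum>i<n. v i ^ 4 / (r i * \<nu> ^ 3))"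
      using p w \<open>\<mu> > 0\<close> \<open>\<nu> > 0\<close> r v by (rule ball1_rounding_error_le)
    finally show ?thesis .
  qed
  ultimately show ?thesis
    unfolding c_def by (simp add: field_simps)
qed

definition centre_coords :: "real \<Rightarrow> real \<Rightarrow> int set" where
  "centre_coords p r = {k. \<bar>of_int k\<bar> \<le> p \<and> (k = 0 \<or> 1 \<le> p * r * (\<bar>of_int k\<bar> + 1))}"

definition centres :: "real \<Rightarrow> nat \<Rightarrow> (nat \<Rightarrow> real) \<Rightarrow> (nat \<Rightarrow> int) set" where
  "centres p n r = {k \<in> PiE {..<n} (\<lambda>i. centre_coords p (r i)). (\<Sum>i<n. \<bar>of_int (k i)\<bar>) \<le> p}"

lemma round_coord_mem_centres:
  assumes p: "p \<ge> 1" and w: "w \<in> ball1 n"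
  shows "restrict (\<lambda>i. round_coord p (r i) (sqrt p * w i)) {..<n} \<in> centres p n r"
proof -
  let ?k = "\<lambda>i. round_coord p (r i) (sqrt p * w i)"
  have w1: "(\<Sum>i<n. \<bar>w i\<bar>) \<le> 1" using w by (simp add: ball1_def)
  have k_le: "\<bar>of_int (?k i)\<bar> \<le> p * \<bar>w i\<bar>" for i
    using abs_round_coord_le[of p "r i" "sqrt p * w i"] p
    by (simp add: abs_mult mult.assoc[symmetric])
  have "?k i \<in> centre_coords p (r i)" if "i < n" for i
  proof -
    have "\<bar>w i\<bar> \<le> 1"
      using w1 member_le_sum[of i "{..<n}" "\<lambda>i. \<bar>w i\<bar>"] that by simp
    then have "\<bar>of_int (?k i)\<bar> \<le> p"
      using k_le[of i] p by (meson dual_order.trans mult_left_le order_trans zero_le_one)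
    then show ?thesis
      using round_coord_nonzero[of p "r i" "sqrt p * w i"] p unfolding centre_coords_def by auto
  qed
  moreover have "(\<Sum>i<n. \<bar>of_int (?k i) :: real\<bar>) \<le> p"
  proof -
    have "(\<Sum>i<n. \<bar>of_int (?k i) :: real\<bar>) \<le> (\<Sum>i<n. p * \<bar>w i\<bar>)"
      by (intro sum_mono k_le)
    also have "\<dots> \<le> p" using w1 p by (simp add: sum_distrib_left[symmetric] mult_left_le)
    finally show ?thesis .
  qed
  ultimately show ?thesis unfolding centres_def by auto
qed

lemma cells_cover:
  assumes "p \<ge> 1"
  shows "mink_sum (ball2 n) (dilate (sqrt p) (ball1 n)) \<subseteq> (\<Union>k\<in>centres p n r. cell p n r k)"
proof
  fix x assume "x \<in> mink_sum (ball2 n) (dilate (sqrt p) (ball1 n))"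
  then obtain u w where "u \<in> ball2 n" "w \<in> ball1 n" "x = (\<lambda>i. u i + sqrt p * w i)"
    unfolding mink_sum_def dilate_def by blast
  moreover define k where "k = restrict (\<lambda>i. round_coord p (r i) (sqrt p * w i)) {..<n}"
  ultimately have "x \<in> cell p n r k" "k \<in> centres p n r"
    using round_coord_mem_centres[OF assms] unfolding cell_def by auto
  then show "x \<in> (\<Union>k\<in>centres p n r. cell p n r k)" by blast
qed

lemma abs_le_on_cell:
  assumes "p \<ge> 0" and "x \<in> cell p n r k" and "i < n"
  shows "\<bar>x i\<bar> \<le> 1 + sqrt p"
proof -
  obtain u w where u: "u \<in> ball2 n" and w: "w \<in> ball1 n" and x: "x = (\<lambda>i. u i + sqrt p * w i)"
    using assms(2) unfolding cell_def by blast
  have "(u i)\<^sup>2 \<le> 1"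
    using u member_le_sum[of i "{..<n}" "\<lambda>i. (u i)\<^sup>2"] assms(3) by (simp add: ball2_def)
  then have "\<bar>u i\<bar> \<le> 1" by (simp add: abs_square_le_1)
  moreover have "\<bar>w i\<bar> \<le> 1"
    using w member_le_sum[of i "{..<n}" "\<lambda>i. \<bar>w i\<bar>"] assms(3) by (simp add: ball1_def)
  ultimately have "\<bar>u i\<bar> + sqrt p * \<bar>w i\<bar> \<le> 1 + sqrt p"
    using assms(1) by (simp add: add_mono mult_left_le)
  then show ?thesis
    unfolding x using assms(1) abs_triangle_ineq[of "u i" "sqrt p * w i"] by (simp add: abs_mult)
qed

lemma sum_weighted_halves_eq:
  "(\<Sum>k\<in>{- int N..int N}. (real (nat \<bar>k\<bar>) + 1) * (1/2) ^ nat \<bar>k\<bar>) = 7 - 2 * (real N + 3) / 2 ^ N"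
proof (induction N)
  case 0
  then show ?case by simp
next
  case (Suc N)
  have "{- int (Suc N)..int (Suc N)} = insert (- int N - 1) (insert (int N + 1) {- int N..int N})"
    by auto
  moreover have "nat \<bar>- int N - 1\<bar> = Suc N" "nat \<bar>int N + 1\<bar> = Suc N"
    "nat (1 + int N) = Suc N" "nat (int N + 1) = Suc N" by auto
  ultimately have "(\<Sum>k\<in>{- int (Suc N)..int (Suc N)}. (real (nat \<bar>k\<bar>) + 1) * (1/2) ^ nat \<bar>k\<bar>)
      = 2 * ((real N + 2) * (1/2) ^ Suc N)
        + (\<Sum>k\<in>{- int N..int N}. (real (nat \<bar>k\<bar>) + 1) * (1/2) ^ nat \<bar>k\<bar>)"
    by (simp del: power_Suc)
  also have "\<dots> = 7 - 2 * (real (Suc N) + 3) / 2 ^ Suc N"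
    using Suc by (simp add: field_simps power_divide)
  finally show ?case .
qed

lemma centre_coords_subset: "centre_coords p r \<subseteq> {- int (nat \<lceil>p\<rceil>)..int (nat \<lceil>p\<rceil>)}"
  unfolding centre_coords_def by (auto, linarith+)

lemma finite_centre_coords: "finite (centre_coords p r)"
  using centre_coords_subset by (rule finite_subset) simp

lemma sum_centre_coords_le:
  assumes p: "p \<ge> 1" and r: "r \<ge> 0"
  shows "(\<Sum>k\<in>centre_coords p r. (1/2::real) ^ nat \<bar>k\<bar>) \<le> 1 + 7 * p * r"
proof -
  let ?g = "\<lambda>k::int. (real (nat \<bar>k\<bar>) + 1) * (1/2::real) ^ nat \<bar>k\<bar>"
  have "(\<Sum>k\<in>centre_coords p r. (1/2::real) ^ nat \<bar>k\<bar>)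
      \<le> (\<Sum>k\<in>centre_coords p r. (if k = 0 then 1 else 0) + p * r * ?g k)"
  proof (rule sum_mono)
    fix k assume k: "k \<in> centre_coords p r"
    show "(1/2::real) ^ nat \<bar>k\<bar> \<le> (if k = 0 then 1 else 0) + p * r * ?g k"
    proof (cases "k = 0")
      case True
      then show ?thesis using p r by simp
    next
      case False
      then have "1 \<le> p * r * (real (nat \<bar>k\<bar>) + 1)" using k by (simp add: centre_coords_def)
      from mult_right_mono[OF this, of "(1/2::real) ^ nat \<bar>k\<bar>"]
      show ?thesis using False by (simp add: mult.assoc)
    qed
  qed
  also have "\<dots> = (\<Sum>k\<in>centre_coords p r. (if k = 0 then 1 else 0)) + p * r * (\<Sum>k\<in>centre_coords p r. ?g k)"
    by (simp add: sum.distrib sum_distrib_left)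
  also have "\<dots> \<le> 1 + p * r * 7"
  proof (rule add_mono)
    show "(\<Sum>k\<in>centre_coords p r. (if k = 0 then 1 else 0)) \<le> (1::real)"
      using finite_centre_coords[of p r] by (simp add: sum.If_cases)
    have "(\<Sum>k\<in>centre_coords p r. ?g k) \<le> (\<Sum>k\<in>{- int (nat \<lceil>p\<rceil>)..int (nat \<lceil>p\<rceil>)}. ?g k)"
      using centre_coords_subset[of p r] by (intro sum_mono2) auto
    also have "\<dots> \<le> 7" unfolding sum_weighted_halves_eq by simp
    finally show "p * r * (\<Sum>k\<in>centre_coords p r. ?g k) \<le> p * r * 7"
      using p r by (intro mult_left_mono) auto
  qed
  finally show ?thesis by (simp add: mult_ac)
qed

lemma finite_centres: "finite (centres p n r)"
proof -
  have "finite (PiE {..<n} (\<lambda>i. centre_coords p (r i)))"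
    by (intro finite_PiE finite_centre_coords) auto
  then show ?thesis unfolding centres_def by simp
qed

text \<open>Each centre \<open>k\<close> has weight \<open>2 ^ -(\<Sum>\<^sub>i |k\<^sub>i|) \<ge> 2 ^ -p\<close>, while the total weight of the
  product set factorises and is at most \<open>\<Prod>\<^sub>i (1 + 7 p r\<^sub>i) \<le> exp (7 p)\<close>.\<close>

lemma card_centres_le:
  assumes p: "p \<ge> 1" and r: "\<And>i. 0 \<le> r i" and r_sum: "(\<Sum>i<n. r i) \<le> 1"
  shows "real (card (centres p n r)) \<le> exp (8 * p)"
proof -
  let ?f = "\<lambda>k::nat\<Rightarrow>int. (\<Prod>i<n. (1/2::real) ^ nat \<bar>k i\<bar>)"
  let ?Pi = "PiE {..<n} (\<lambda>i. centre_coords p (r i))"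
  have weight: "1 \<le> 2 powr p * ?f k" if "k \<in> centres p n r" for k
  proof -
    define s where "s = (\<Sum>i<n. nat \<bar>k i\<bar>)"
    have "?f k = (1/2) ^ s"
      unfolding s_def power_sum by (rule refl)
    then have f: "?f k = 1 / 2 powr real s"
      by (simp add: powr_realpow power_one_over)
    have "real s \<le> p" using that by (simp add: s_def centres_def)
    then have "2 powr real s \<le> 2 powr p" by (intro powr_mono) auto
    then show ?thesis unfolding f by (simp add: field_simps)
  qed
  have "real (card (centres p n r)) \<le> (\<Sum>k\<in>centres p n r. 2 powr p * ?f k)"
    using sum_mono[OF weight] by simp
  also have "\<dots> \<le> (\<Sum>k\<in>?Pi. 2 powr p * ?f k)"
  proof (rule sum_mono2)
    show "finite ?Pi" by (intro finite_PiE finite_centre_coords) auto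
    show "centres p n r \<subseteq> ?Pi" unfolding centres_def by blast
  qed (intro mult_nonneg_nonneg prod_nonneg; simp)
  also have "\<dots> = 2 powr p * (\<Prod>i<n. \<Sum>k\<in>centre_coords p (r i). (1/2::real) ^ nat \<bar>k\<bar>)"
    by (simp only: prod_sum_PiE[OF finite_lessThan finite_centre_coords] sum_distrib_left)
  also have "\<dots> \<le> 2 powr p * (\<Prod>i<n. exp (7 * p * r i))"
  proof (intro mult_left_mono prod_mono conjI)
    fix i
    show "0 \<le> (\<Sum>k\<in>centre_coords p (r i). (1/2::real) ^ nat \<bar>k\<bar>)" by (intro sum_nonneg) auto
    show "(\<Sum>k\<in>centre_coords p (r i). (1/2::real) ^ nat \<bar>k\<bar>) \<le> exp (7 * p * r i)"
      using sum_centre_coords_le[OF p r, of i] exp_ge_add_one_self[of "7 * p * r i"] by linarith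
  qed auto
  also have "\<dots> = 2 powr p * exp (7 * p * (\<Sum>i<n. r i))"
    by (simp only: exp_sum[OF finite_lessThan, symmetric] sum_distrib_left)
  also have "\<dots> \<le> exp p * exp (7 * p)"
  proof (rule mult_mono)
    have "2 powr p = exp (p * ln 2)" by (simp add: powr_def)
    also have "\<dots> \<le> exp p" using ln_2_less_1 p by (simp add: mult_left_le)
    finally show "2 powr p \<le> exp p" .
    show "exp (7 * p * (\<Sum>i<n. r i)) \<le> exp (7 * p)" using r_sum p by (simp add: mult_left_le)
  qed auto
  also have "\<dots> = exp (8 * p)" by (simp add: exp_add[symmetric])
  finally show ?thesis .
qed

lemma countable_coordwise_dense_subset:
  fixes P :: "(nat \<Rightarrow> real) set" and n :: nat
  obtains D where "countable D" "D \<subseteq> P" "\<And>x e. x \<in> P \<Longrightarrow> e > 0 \<Longrightarrow> \<exists>d\<in>D. \<forall>i<n. \<bar>x i - d i\<bar> < e"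
proof -
  define near where "near = (\<lambda>(k::nat, q::rat list) x. x \<in> P \<and> (\<forall>i<n. \<bar>x i - of_rat (q!i)\<bar> < 1 / Suc k))"
  define D where "D = (\<lambda>kq. SOME x. near kq x) ` {kq. \<exists>x. near kq x}"
  have near_D: "\<exists>d\<in>D. near kq d" if "near kq x" for kq x
    using that someI[of "near kq" x] unfolding D_def by blast
  have near_P: "x \<in> P" if "near kq x" for kq x
    using that by (cases kq) (simp add: near_def)
  have "countable D" unfolding D_def by (intro countable_image) simp
  moreover have "D \<subseteq> P"
  proof
    fix d assume "d \<in> D"
    then obtain kq where "\<exists>x. near kq x" "d = (SOME x. near kq x)" unfolding D_def by blast
    then show "d \<in> P" using near_P someI_ex by metis
  qed
  moreover have "\<exists>d\<in>D. \<forall>i<n. \<bar>x i - d i\<bar> < e" if x: "x \<in> P" and "e > 0" for x e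
  proof -
    obtain k :: nat where "2 / e < real k" using reals_Archimedean2 by blast
    define \<delta> where "\<delta> = 1 / real (Suc k)"
    have "\<delta> > 0" "2 * \<delta> < e"
      using \<open>2 / e < real k\<close> \<open>e > 0\<close> by (auto simp: \<delta>_def field_simps)
    have "\<exists>q::rat. \<bar>x i - of_rat q\<bar> < \<delta>" for i
    proof -
      obtain t where "t \<in> \<rat>" "x i - \<delta> < t" "t < x i + \<delta>"
        using Rats_dense_in_real[of "x i - \<delta>" "x i + \<delta>"] \<open>\<delta> > 0\<close> by auto
      then obtain q where "x i - \<delta> < of_rat q" "of_rat q < x i + \<delta>"
        by (auto elim!: Rats_cases)
      then show ?thesis by (intro exI[of _ q]) auto
    qed
    then obtain qf :: "nat \<Rightarrow> rat" where qf: "\<And>i. \<bar>x i - of_rat (qf i)\<bar> < \<delta>" by metis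
    have "near (k, map qf [0..<n]) x" using x qf by (simp add: near_def \<delta>_def)
    then obtain d where "d \<in> D" and "near (k, map qf [0..<n]) d"
      using near_D by blast
    then have "\<bar>d i - of_rat (qf i)\<bar> < \<delta>" if "i < n" for i
      using that by (simp add: near_def \<delta>_def)
    then have "\<bar>x i - d i\<bar> < e" if "i < n" for i
      using that qf[of i] \<open>2 * \<delta> < e\<close> by fastforce
    with \<open>d \<in> D\<close> show ?thesis by blast
  qed
  ultimately show ?thesis using that by blast
qed

lemma abs_linear_form_le:
  fixes x v :: "nat \<Rightarrow> real"
  assumes "\<And>i. i < n \<Longrightarrow> \<bar>x i\<bar> \<le> B"
  shows "\<bar>\<Sum>i<n. x i * v i\<bar> \<le> B * (\<Sum>i<n. \<bar>v i\<bar>)"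
proof -
  have "\<bar>\<Sum>i<n. x i * v i\<bar> \<le> (\<Sum>i<n. \<bar>x i\<bar> * \<bar>v i\<bar>)"
    using sum_abs[of "\<lambda>i. x i * v i"] by (simp add: abs_mult)
  also have "\<dots> \<le> (\<Sum>i<n. B * \<bar>v i\<bar>)"
    using assms by (intro sum_mono mult_right_mono) auto
  finally show ?thesis by (simp add: sum_distrib_left)
qed

lemma
  fixes P :: "(nat \<Rightarrow> real) set"
  assumes "P \<noteq> {}" and bound: "\<And>x i. x \<in> P \<Longrightarrow> i < n \<Longrightarrow> \<bar>x i\<bar> \<le> B"
  shows bdd_above_linear_form: "bdd_above ((\<lambda>x. \<Sum>i<n. x i * v i) ` P)"
    and abs_Sup_linear_form_le: "\<bar>Sup ((\<lambda>x. \<Sum>i<n. x i * v i) ` P)\<bar> \<le> B * (\<Sum>i<n. \<bar>v i\<bar>)"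
proof -
  let ?L = "\<lambda>x. \<Sum>i<n. x i * v i"
  have L: "- (B * (\<Sum>i<n. \<bar>v i\<bar>)) \<le> ?L x \<and> ?L x \<le> B * (\<Sum>i<n. \<bar>v i\<bar>)" if "x \<in> P" for x
    using abs_linear_form_le[of n x B v] bound[OF that] by (simp add: abs_le_iff)
  then show bdd: "bdd_above (?L ` P)"
    by (intro bdd_aboveI[of _ "B * (\<Sum>i<n. \<bar>v i\<bar>)"]) auto
  obtain x where "x \<in> P" using \<open>P \<noteq> {}\<close> by blast
  then have "?L x \<le> Sup (?L ` P)" using bdd by (intro cSup_upper) auto
  moreover have "Sup (?L ` P) \<le> B * (\<Sum>i<n. \<bar>v i\<bar>)"
    using \<open>P \<noteq> {}\<close> L by (intro cSup_least) auto
  ultimately show "\<bar>Sup (?L ` P)\<bar> \<le> B * (\<Sum>i<n. \<bar>v i\<bar>)"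
    using L[OF \<open>x \<in> P\<close>] by (simp add: abs_le_iff)
qed

lemma Sup_linear_form_dense_subset:
  fixes P D :: "(nat \<Rightarrow> real) set"
  assumes "D \<subseteq> P" and dense: "\<And>x e. x \<in> P \<Longrightarrow> e > 0 \<Longrightarrow> \<exists>d\<in>D. \<forall>i<n. \<bar>x i - d i\<bar> < e"
    and "P \<noteq> {}" and bdd: "bdd_above ((\<lambda>x. \<Sum>i<n. x i * v i) ` P)"
  shows "Sup ((\<lambda>x. \<Sum>i<n. x i * v i) ` P) = Sup ((\<lambda>x. \<Sum>i<n. x i * v i) ` D)"
proof -
  let ?L = "\<lambda>x. \<Sum>i<n. x i * v i"
  have "D \<noteq> {}" using \<open>P \<noteq> {}\<close> dense[of _ 1] by fastforce
  have bdd_D: "bdd_above (?L ` D)" using bdd \<open>D \<subseteq> P\<close> by (meson bdd_above_mono image_mono)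
  have "?L x \<le> Sup (?L ` D)" if "x \<in> P" for x
  proof (rule field_le_epsilon)
    fix \<epsilon> :: real assume "0 < \<epsilon>"
    define c where "c = (\<Sum>i<n. \<bar>v i\<bar>) + 1"
    have "c > 0" unfolding c_def by (simp add: sum_nonneg add_nonneg_pos)
    then obtain d where "d \<in> D" and d: "\<And>i. i < n \<Longrightarrow> \<bar>x i - d i\<bar> < \<epsilon> / c"
      using dense[OF \<open>x \<in> P\<close>, of "\<epsilon> / c"] \<open>0 < \<epsilon>\<close> by auto
    have "?L x - ?L d = (\<Sum>i<n. (x i - d i) * v i)" by (simp add: sum_subtractf algebra_simps)
    also have "\<dots> \<le> \<epsilon> / c * (\<Sum>i<n. \<bar>v i\<bar>)"
      using abs_linear_form_le[of n "\<lambda>i. x i - d i" "\<epsilon> / c" v] d by fastforce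
    also have "\<dots> \<le> \<epsilon>" using \<open>c > 0\<close> \<open>0 < \<epsilon>\<close> by (simp add: c_def field_simps)
    finally have "?L x \<le> ?L d + \<epsilon>" by simp
    moreover have "?L d \<le> Sup (?L ` D)" using \<open>d \<in> D\<close> bdd_D by (intro cSup_upper) auto
    ultimately show "?L x \<le> Sup (?L ` D) + \<epsilon>" by simp
  qed
  then have "Sup (?L ` P) \<le> Sup (?L ` D)"
    using \<open>P \<noteq> {}\<close> by (intro cSup_least) auto
  moreover have "Sup (?L ` D) \<le> Sup (?L ` P)"
    using \<open>D \<noteq> {}\<close> bdd \<open>D \<subseteq> P\<close> by (intro cSup_subset_mono) auto
  ultimately show ?thesis by simp
qed

text \<open>Measurability of the supremum over the possibly uncountable \<open>P\<close> comes from replacing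
  \<open>P\<close> by a countable coordinatewise dense subset.\<close>

lemma integrable_Sup_linear_form:
  fixes P :: "(nat \<Rightarrow> real) set" and V :: "nat \<Rightarrow> 'a \<Rightarrow> real"
  assumes "P \<noteq> {}" and bound: "\<And>x i. x \<in> P \<Longrightarrow> i < n \<Longrightarrow> \<bar>x i\<bar> \<le> B" and "B \<ge> 0"
    and V: "\<And>i. i < n \<Longrightarrow> integrable M (V i)"
  shows "integrable M (\<lambda>\<omega>. Sup ((\<lambda>x. \<Sum>i<n. x i * V i \<omega>) ` P))"
proof (rule Bochner_Integration.integrable_bound)
  show "integrable M (\<lambda>\<omega>. B * (\<Sum>i<n. \<bar>V i \<omega>\<bar>))"
    using V by (intro integrable_mult_right integrable_sum integrable_abs) auto
  obtain D where "countable D" "D \<subseteq> P"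
    and dense: "\<And>x e. x \<in> P \<Longrightarrow> e > 0 \<Longrightarrow> \<exists>d\<in>D. \<forall>i<n. \<bar>x i - d i\<bar> < e"
    using countable_coordwise_dense_subset by blast
  have bdd: "bdd_above ((\<lambda>x. \<Sum>i<n. x i * V i \<omega>) ` P)" for \<omega>
    using \<open>P \<noteq> {}\<close> bound by (rule bdd_above_linear_form)
  have "(\<lambda>\<omega>. SUP d\<in>D. (\<Sum>i<n. d i * V i \<omega>)) \<in> borel_measurable M"
  proof (rule borel_measurable_cSUP[OF \<open>countable D\<close>])
    show "(\<lambda>\<omega>. \<Sum>i<n. d i * V i \<omega>) \<in> borel_measurable M" for d
      using V by (intro borel_measurable_sum borel_measurable_times) auto
    show "bdd_above ((\<lambda>d. \<Sum>i<n. d i * V i \<omega>) ` D)" for \<omega>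
      using bdd \<open>D \<subseteq> P\<close> by (meson bdd_above_mono image_mono)
  qed
  then show "(\<lambda>\<omega>. Sup ((\<lambda>x. \<Sum>i<n. x i * V i \<omega>) ` P)) \<in> borel_measurable M"
    using Sup_linear_form_dense_subset[OF \<open>D \<subseteq> P\<close> dense \<open>P \<noteq> {}\<close> bdd] by simp
  show "AE \<omega> in M. norm (Sup ((\<lambda>x. \<Sum>i<n. x i * V i \<omega>) ` P)) \<le> norm (B * (\<Sum>i<n. \<bar>V i \<omega>\<bar>))"
  proof (rule AE_I2)
    fix \<omega>
    have "\<bar>Sup ((\<lambda>x. \<Sum>i<n. x i * V i \<omega>) ` P)\<bar> \<le> B * (\<Sum>i<n. \<bar>V i \<omega>\<bar>)"
      using \<open>P \<noteq> {}\<close> bound by (rule abs_Sup_linear_form_le)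
    then show "norm (Sup ((\<lambda>x. \<Sum>i<n. x i * V i \<omega>) ` P)) \<le> norm (B * (\<Sum>i<n. \<bar>V i \<omega>\<bar>))"
      using \<open>B \<ge> 0\<close> by (simp add: sum_nonneg)
  qed
qed

lemma le_of_parametric_bound:
  fixes E A R S Q :: real
  assumes E: "\<And>\<mu> \<nu>. \<mu> > 0 \<Longrightarrow> \<nu> > 0 \<Longrightarrow> E \<le> \<mu> + \<nu> + A / \<mu> + 3 * R / \<nu> ^ 3"
    and "0 \<le> A" "A\<^sup>2 \<le> S * Q" and "0 \<le> R" "R \<le> S * Q" and "0 \<le> S" "0 \<le> Q"
  shows "E \<le> 6 * Q powr (1/4) * S powr (1/4)"
proof (cases "S * Q > 0")
  case True
  define t where "t = (S * Q) powr (1/4)"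
  have "t > 0" unfolding t_def using True by (metis powr_gt_zero less_irrefl)
  have "t ^ 4 = S * Q"
    using True \<open>t > 0\<close> by (simp add: t_def powr_realpow[symmetric] powr_powr)
  then have "A\<^sup>2 \<le> (t\<^sup>2)\<^sup>2" and "R \<le> t * t ^ 3"
    using assms by (simp_all add: power4_eq_xxxx power2_eq_square power3_eq_cube)
  then have "A \<le> t\<^sup>2" and "R / t ^ 3 \<le> t"
    using \<open>t > 0\<close> power2_le_imp_le[of A "t\<^sup>2"] by (simp_all add: divide_le_eq mult.commute)
  then have "A / t \<le> t" and "3 * R / t ^ 3 \<le> 3 * t"
    using \<open>t > 0\<close> by (simp_all add: divide_le_eq power2_eq_square)
  moreover have "E \<le> t + t + A / t + 3 * R / t ^ 3" using E \<open>t > 0\<close> by blast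
  ultimately have "E \<le> 6 * t" by linarith
  moreover have "t = Q powr (1/4) * S powr (1/4)"
    unfolding t_def using assms by (simp add: powr_mult mult.commute)
  ultimately show ?thesis by (simp add: mult.assoc)
next
  case False
  then have "S * Q = 0" using assms mult_nonneg_nonneg[of S Q] by linarith
  then have "A\<^sup>2 \<le> 0" "R \<le> 0" using assms by linarith+
  then have "A = 0" "R = 0" using assms by simp_all
  have "E \<le> 0"
  proof (rule field_le_epsilon)
    fix e :: real assume "e > 0"
    then have "E \<le> e/2 + e/2 + A / (e/2) + 3 * R / (e/2) ^ 3" by (intro E) auto
    then show "E \<le> 0 + e" using \<open>A = 0\<close> \<open>R = 0\<close> by simp
  qed
  also have "0 \<le> 6 * Q powr (1/4) * S powr (1/4)" by simp
  finally show ?thesis .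
qed

definition row_weights :: "(nat \<Rightarrow> nat \<Rightarrow> real) \<Rightarrow> nat \<Rightarrow> nat \<Rightarrow> nat \<Rightarrow> real" where
  "row_weights a n m i = (\<Sum>j<m. (a i j)\<^sup>2) / (\<Sum>i<n. \<Sum>j<m. (a i j)\<^sup>2)"

lemma row_weights_nonneg: "0 \<le> row_weights a n m i"
  unfolding row_weights_def by (intro divide_nonneg_nonneg sum_nonneg) auto

lemma sum_row_weights_le: "(\<Sum>i<n. row_weights a n m i) \<le> 1"
  unfolding row_weights_def sum_divide_distrib[symmetric] by (simp add: divide_le_eq_1)

lemma row_weights_eq_0D:
  assumes "row_weights a n m i = 0" and "i < n" and "j < m"
  shows "a i j = 0"
proof -
  have "(\<Sum>j<m. (a i j)\<^sup>2) \<le> (\<Sum>i<n. \<Sum>j<m. (a i j)\<^sup>2)"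
    using \<open>i < n\<close> by (intro member_le_sum sum_nonneg) auto
  moreover have "0 \<le> (\<Sum>j<m. (a i j)\<^sup>2)" by (simp add: sum_nonneg)
  ultimately have "(\<Sum>j<m. (a i j)\<^sup>2) = 0"
    using assms(1) by (auto simp: row_weights_def)
  then show ?thesis
    using \<open>j < m\<close> by (subst (asm) sum_nonneg_eq_0_iff) auto
qed

lemma row_moments_le:
  fixes a :: "nat \<Rightarrow> nat \<Rightarrow> real" and z :: "nat \<Rightarrow> real" and n m :: nat
  defines "s \<equiv> \<lambda>i. \<Sum>j<m. (a i j * z j)\<^sup>2"
    and "S \<equiv> \<Sum>i<n. \<Sum>j<m. (a i j)\<^sup>2"
    and "Q \<equiv> \<Sum>i<n. \<Sum>j<m. (a i j)\<^sup>2 * z j ^ 4"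
  shows "(\<Sum>i<n. s i)\<^sup>2 \<le> S * Q" and "(\<Sum>i<n. (s i)\<^sup>2 / row_weights a n m i) \<le> S * Q"
proof -
  define \<alpha> where "\<alpha> = (\<lambda>i. \<Sum>j<m. (a i j)\<^sup>2)"
  define \<beta> where "\<beta> = (\<lambda>i. \<Sum>j<m. (a i j)\<^sup>2 * z j ^ 4)"
  have \<alpha>: "0 \<le> \<alpha> i" and \<beta>: "0 \<le> \<beta> i" and s: "0 \<le> s i" for i
    unfolding \<alpha>_def \<beta>_def s_def by (auto intro!: sum_nonneg simp: zero_le_even_power)
  have "0 \<le> S" unfolding S_def by (simp add: sum_nonneg)
  have cs: "(s i)\<^sup>2 \<le> \<alpha> i * \<beta> i" for i
  proof -
    have "(\<Sum>j<m. a i j * (a i j * (z j)\<^sup>2))\<^sup>2 \<le> (\<Sum>j<m. (a i j)\<^sup>2) * (\<Sum>j<m. (a i j * (z j)\<^sup>2)\<^sup>2)"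
      by (rule Cauchy_Schwarz_ineq_sum)
    then show ?thesis
      unfolding s_def \<alpha>_def \<beta>_def by (simp add: power2_eq_square power4_eq_xxxx mult_ac)
  qed
  have "(\<Sum>i<n. s i) \<le> (\<Sum>i<n. sqrt (\<alpha> i) * sqrt (\<beta> i))"
    using cs by (intro sum_mono) (simp add: real_le_rsqrt real_sqrt_mult[symmetric])
  then have "(\<Sum>i<n. s i)\<^sup>2 \<le> (\<Sum>i<n. sqrt (\<alpha> i) * sqrt (\<beta> i))\<^sup>2"
    using s by (intro power_mono sum_nonneg) auto
  also have "\<dots> \<le> (\<Sum>i<n. (sqrt (\<alpha> i))\<^sup>2) * (\<Sum>i<n. (sqrt (\<beta> i))\<^sup>2)"
    by (rule Cauchy_Schwarz_ineq_sum)
  also have "\<dots> = S * Q" using \<alpha> \<beta> by (simp add: S_def Q_def \<alpha>_def \<beta>_def)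
  finally show "(\<Sum>i<n. s i)\<^sup>2 \<le> S * Q" .
  have "(s i)\<^sup>2 / row_weights a n m i \<le> S * \<beta> i" for i
  proof (cases "\<alpha> i = 0 \<or> S = 0")
    case True
    then show ?thesis
      using \<open>0 \<le> S\<close> \<beta>[of i] by (auto simp: row_weights_def \<alpha>_def S_def)
  next
    case False
    then have "\<alpha> i > 0" "S > 0" using \<alpha>[of i] \<open>0 \<le> S\<close> by auto
    then have "(s i)\<^sup>2 / row_weights a n m i = (s i)\<^sup>2 * S / \<alpha> i"
      by (simp add: row_weights_def \<alpha>_def S_def)
    also have "\<dots> \<le> (\<alpha> i * \<beta> i) * S / \<alpha> i"
      using cs[of i] \<open>\<alpha> i > 0\<close> \<open>S > 0\<close> by (intro divide_right_mono mult_right_mono) auto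
    also have "\<dots> = S * \<beta> i" using \<open>\<alpha> i > 0\<close> by simp
    finally show ?thesis .
  qed
  then have "(\<Sum>i<n. (s i)\<^sup>2 / row_weights a n m i) \<le> (\<Sum>i<n. S * \<beta> i)"
    by (rule sum_mono)
  also have "\<dots> = S * Q" unfolding Q_def \<beta>_def by (simp add: sum_distrib_left)
  finally show "(\<Sum>i<n. (s i)\<^sup>2 / row_weights a n m i) \<le> S * Q" .
qed

lemma expectation_Sup_on_cell_le:
  fixes a :: "nat \<Rightarrow> nat \<Rightarrow> real" and z :: "nat \<Rightarrow> real" and P :: "(nat \<Rightarrow> real) set"
  assumes p: "p \<ge> 1" and P: "P \<subseteq> cell p n (row_weights a n m) k" "P \<noteq> {}"
  defines "F \<equiv> \<lambda>g. Sup ((\<lambda>x. \<Sum>i<n. \<Sum>j<m. a i j * x i * g j * z j) ` P)"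
  shows "integrable (gauss_vec m) F"
    and "(\<integral>g. F g \<partial>gauss_vec m)
           \<le> 6 * (\<Sum>i<n. \<Sum>j<m. (a i j)\<^sup>2 * (z j)^4) powr (1/4) * (\<Sum>i<n. \<Sum>j<m. (a i j)\<^sup>2) powr (1/4)"
proof -
  define r where "r = row_weights a n m"
  define V where "V = (\<lambda>i g. \<Sum>j<m. (a i j * z j) * g j)"
  define s where "s = (\<lambda>i. \<Sum>j<m. (a i j * z j)\<^sup>2)"
  have F: "F = (\<lambda>g. Sup ((\<lambda>x. \<Sum>i<n. x i * V i g) ` P))"
    unfolding F_def V_def by (intro ext arg_cong[where f = Sup] image_cong refl sum.cong)
      (auto simp: sum_distrib_left mult_ac)
  have bound: "\<bar>x i\<bar> \<le> 1 + sqrt p" if "x \<in> P" "i < n" for x i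
    using abs_le_on_cell[of p x n] P(1) p that by auto
  have V: "integrable (gauss_vec m) (V i)" for i
    using gauss_vec_linear_moments(1)[where b = "\<lambda>j. a i j * z j" and m = m and k = 1] by (simp add: V_def)
  have V_0: "V i g = 0" if "i < n" "r i = 0" for i g
    using row_weights_eq_0D[of a n m i] that unfolding V_def r_def by (auto intro!: sum.neutral)
  show int_F: "integrable (gauss_vec m) F"
    unfolding F using P(2) bound p V by (intro integrable_Sup_linear_form) auto
  have E_F: "(\<integral>g. F g \<partial>gauss_vec m) \<le> \<mu> + \<nu> + (\<Sum>i<n. s i) / \<mu> + 3 * (\<Sum>i<n. (s i)\<^sup>2 / r i) / \<nu> ^ 3"
    if "\<mu> > 0" "\<nu> > 0" for \<mu> \<nu>
  proof -
    define U where "U = (\<lambda>g. (\<Sum>i<n. of_int (k i) / sqrt p * V i g) + \<mu> + \<nu>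
      + (\<Sum>i<n. (V i g)\<^sup>2) / \<mu> + (\<Sum>i<n. V i g ^ 4 / (r i * \<nu> ^ 3)))"
    have dominant: "integrable (gauss_vec m) U" "(\<integral>g. U g \<partial>gauss_vec m)
        = \<mu> + \<nu> + (\<Sum>i<n. s i) / \<mu> + 3 * (\<Sum>i<n. (s i)\<^sup>2 / r i) / \<nu> ^ 3"
      unfolding U_def V_def s_def by (rule integral_gauss_vec_dominant)+
    have "F g \<le> U g" for g
      unfolding F U_def using P(2)
    proof (intro cSup_least, blast, clarify)
      fix x assume "x \<in> P"
      then show "(\<Sum>i<n. x i * V i g) \<le> (\<Sum>i<n. of_int (k i) / sqrt p * V i g) + \<mu> + \<nu>
          + (\<Sum>i<n. (V i g)\<^sup>2) / \<mu> + (\<Sum>i<n. V i g ^ 4 / (r i * \<nu> ^ 3))"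
        using P(1) p \<open>\<mu> > 0\<close> \<open>\<nu> > 0\<close> V_0
        by (intro linear_form_le_on_cell) (auto simp: r_def row_weights_nonneg)
    qed
    then have "(\<integral>g. F g \<partial>gauss_vec m) \<le> (\<integral>g. U g \<partial>gauss_vec m)"
      using int_F dominant(1) by (intro integral_mono)
    then show ?thesis using dominant(2) by simp
  qed
  then show "(\<integral>g. F g \<partial>gauss_vec m)
      \<le> 6 * (\<Sum>i<n. \<Sum>j<m. (a i j)\<^sup>2 * (z j)^4) powr (1/4) * (\<Sum>i<n. \<Sum>j<m. (a i j)\<^sup>2) powr (1/4)"
    using E_F row_moments_le[of a z m n] unfolding s_def r_def
    by (intro le_of_parametric_bound[where A = "\<Sum>i<n. s i" and R = "\<Sum>i<n. (s i)\<^sup>2 / r i"])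
      (auto intro!: sum_nonneg divide_nonneg_nonneg row_weights_nonneg simp: s_def r_def zero_le_even_power)
qed

lemma decomposition_into_cells:
  fixes a :: "nat \<Rightarrow> nat \<Rightarrow> real" and T :: "(nat \<Rightarrow> real) set"
  assumes p: "p \<ge> 1" and T: "T \<subseteq> mink_sum (ball2 n) (dilate (sqrt p) (ball1 n))"
  shows "\<exists>N Tl. real N \<le> exp (8 * p) \<and> T = (\<Union>l\<in>{1..N}. Tl l) \<and>
      (\<forall>l\<in>{1..N}. \<forall>z. Tl l \<noteq> {} \<longrightarrow>
        integrable (gauss_vec m) (\<lambda>g. Sup ((\<lambda>x. \<Sum>i<n. \<Sum>j<m. a i j * x i * g j * z j) ` Tl l)) \<and>
        (\<integral>g. Sup ((\<lambda>x. \<Sum>i<n. \<Sum>j<m. a i j * x i * g j * z j) ` Tl l) \<partial>gauss_vec m)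
          \<le> 8 * (\<Sum>i<n. \<Sum>j<m. (a i j)\<^sup>2 * (z j)^4) powr (1/4) * (\<Sum>i<n. \<Sum>j<m. (a i j)\<^sup>2) powr (1/4))"
proof -
  define r where "r = row_weights a n m"
  define N where "N = card (centres p n r)"
  obtain h where h: "bij_betw h {1..N} (centres p n r)"
    using ex_bij_betw_nat_finite_1[OF finite_centres] unfolding N_def by blast
  define Tl where "Tl = (\<lambda>l. T \<inter> cell p n r (h l))"
  have "real N \<le> exp (8 * p)"
    unfolding N_def r_def using p row_weights_nonneg sum_row_weights_le by (rule card_centres_le)
  moreover have "T = (\<Union>l\<in>{1..N}. Tl l)"
  proof -
    have "T \<subseteq> (\<Union>l\<in>{1..N}. cell p n r (h l))"
      using T cells_cover[OF p, of n r] unfolding bij_betw_imp_surj_on[OF h, symmetric]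
      by (simp add: image_image)
    then show ?thesis by (auto simp: Tl_def)
  qed
  moreover have "integrable (gauss_vec m) (\<lambda>g. Sup ((\<lambda>x. \<Sum>i<n. \<Sum>j<m. a i j * x i * g j * z j) ` Tl l))
      \<and> (\<integral>g. Sup ((\<lambda>x. \<Sum>i<n. \<Sum>j<m. a i j * x i * g j * z j) ` Tl l) \<partial>gauss_vec m)
          \<le> 8 * (\<Sum>i<n. \<Sum>j<m. (a i j)\<^sup>2 * (z j)^4) powr (1/4) * (\<Sum>i<n. \<Sum>j<m. (a i j)\<^sup>2) powr (1/4)"
    if "Tl l \<noteq> {}" for l z
  proof -
    have "Tl l \<subseteq> cell p n (row_weights a n m) (h l)" by (simp add: Tl_def r_def)
    note cell_bound = expectation_Sup_on_cell_le[OF p this \<open>Tl l \<noteq> {}\<close>, of z]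
    have "0 \<le> (\<Sum>i<n. \<Sum>j<m. (a i j)\<^sup>2 * (z j)^4) powr (1/4) * (\<Sum>i<n. \<Sum>j<m. (a i j)\<^sup>2) powr (1/4)"
      by simp
    then show ?thesis using cell_bound unfolding mult.assoc by linarith
  qed
  ultimately show ?thesis by blast
qed

theorem theorem5p5:
  shows "\<exists>C>0. \<forall>p::real. p \<ge> 1 \<longrightarrow>
    (\<forall>(n::nat) (m::nat) (a::nat \<Rightarrow> nat \<Rightarrow> real) (T::(nat \<Rightarrow> real) set).
      T \<subseteq> mink_sum (ball2 n) (dilate (sqrt p) (ball1 n)) \<longrightarrow>
      (\<exists>(N::nat) (Tl::nat \<Rightarrow> (nat \<Rightarrow> real) set).
         real N \<le> exp (C * p) \<and>
         T = (\<Union>l\<in>{1..N}. Tl l) \<and>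
         (\<forall>l\<in>{1..N}. \<forall>z::nat \<Rightarrow> real. Tl l \<noteq> {} \<longrightarrow>
            integrable (gauss_vec m)
              (\<lambda>g. Sup ((\<lambda>x. \<Sum>i<n. \<Sum>j<m. a i j * x i * g j * z j) ` Tl l)) \<and>
            (\<integral>g. Sup ((\<lambda>x. \<Sum>i<n. \<Sum>j<m. a i j * x i * g j * z j) ` Tl l) \<partial>gauss_vec m)
              \<le> C * (\<Sum>i<n. \<Sum>j<m. (a i j)\<^sup>2 * (z j)^4) powr (1/4)
                  * (\<Sum>i<n. \<Sum>j<m. (a i j)\<^sup>2) powr (1/4))))"
  using decomposition_into_cells by (intro exI[of _ 8]) auto

end
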